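(* Let $n=n_1+\dots+n_k$ be a partition of $n$ into positive integers, let $G=U(n)$, and let $L=U(n_1)\times\cdots\times U(n_k)$ and $H=U(1)\times U(n-1)$ be the natural block-diagonal subgroups of $G$. For $1\le i\le k-1$ set $X_i:=-E_{1,\,n_1+\dots+n_i+1}+E_{n_1+\dots+n_i+1,\,1}$ and $B_i:=\exp(\mathbb{R}X_i)\simeq\mathbb{T}$, and let $B:=B_1B_2\cdots B_{k-1}=\{b_1\cdots b_{k-1}:b_i\in B_i\}\subset O(n)$. Then $G=LBH$.
   Context: $E_{ij}$ denotes the $n\times n$ matrix unit with $1$ in position $(i,j)$ and $0$ elsewhere; $\mathbb{T}$ is the circle group. $LBH=\{xbh:x\in L,b\in B,h\in H\}$. *)

theory Defs
  imports Complex_Main "Jordan_Normal_Form.Matrix"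
begin

text \<open>Matrices are 0-indexed n x n complex matrices (Jordan_Normal_Form).
  The paper's 1-based index r corresponds to index r - 1 here.\<close>

definition conj_transpose :: "complex mat \<Rightarrow> complex mat" where
  "conj_transpose A = mat (dim_col A) (dim_row A) (\<lambda>(i,j). cnj (A $$ (j,i)))"

definition unitary_group :: "nat \<Rightarrow> complex mat set" where
  "unitary_group n = {A \<in> carrier_mat n n. A * conj_transpose A = 1\<^sub>m n}"

definition mat_exp :: "nat \<Rightarrow> complex mat \<Rightarrow> complex mat" where
  "mat_exp n A = mat n n (\<lambda>(i,j). \<Sum>m. (A ^\<^sub>m m) $$ (i,j) / of_nat (fact m))"

definition mat_unit :: "nat \<Rightarrow> nat \<Rightarrow> nat \<Rightarrow> complex mat" where
  "mat_unit n i j = mat n n (\<lambda>(a,b). if a = i \<and> b = j then 1 else 0)"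

definition psum :: "nat list \<Rightarrow> nat \<Rightarrow> nat" where
  "psum ns i = sum_list (take i ns)"

definition block_of :: "nat list \<Rightarrow> nat \<Rightarrow> nat" where
  "block_of ns a = (LEAST l. a < psum ns (Suc l))"

definition L_group :: "nat list \<Rightarrow> complex mat set" where
  "L_group ns = {A \<in> unitary_group (sum_list ns).
     \<forall>a < sum_list ns. \<forall>b < sum_list ns. block_of ns a \<noteq> block_of ns b \<longrightarrow> A $$ (a,b) = 0}"

definition H_group :: "nat \<Rightarrow> complex mat set" where
  "H_group n = {A \<in> unitary_group n. \<forall>b < n. 0 < b \<longrightarrow> A $$ (0,b) = 0 \<and> A $$ (b,0) = 0}"

text \<open>X_i = -E_{1, n_1+...+n_i+1} + E_{n_1+...+n_i+1, 1} (1-based), i.e. 0-based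
  positions (0, psum ns i) and (psum ns i, 0).\<close>
definition X_gen :: "nat list \<Rightarrow> nat \<Rightarrow> complex mat" where
  "X_gen ns i = - mat_unit (sum_list ns) 0 (psum ns i) + mat_unit (sum_list ns) (psum ns i) 0"

definition B_i :: "nat list \<Rightarrow> nat \<Rightarrow> complex mat set" where
  "B_i ns i = {mat_exp (sum_list ns) (complex_of_real t \<cdot>\<^sub>m X_gen ns i) | t. True}"

definition B_set :: "nat list \<Rightarrow> complex mat set" where
  "B_set ns = {foldr (\<lambda>i acc. b i * acc) [1..<length ns] (1\<^sub>m (sum_list ns)) | b.
                  \<forall>i \<in> {1..<length ns}. b i \<in> B_i ns i}"

end

(*
  Let v be the first column of g in U(n) and r_j the norm of its restriction to the j-th block.
  Rotating e_1 successively in the planes (e_1, e_(n_1+...+n_i+1)), i = k-1, ..., 1, with angles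
  chosen so that the weight accumulated at e_1 is split off block by block, gives b in B with
  b e_1 = u, where u has the entry r_j at the first coordinate of block j and zeros elsewhere.
  Within each block a phase followed by a Householder reflection maps that coordinate vector to
  the corresponding piece of v, which gives x in L with x u = v. Then y = x b has the same first
  column as g, so h = y^* g fixes e_1, i.e. h lies in U(1) x U(n-1), and g = x b h.
*)
theory Submission
  imports Defs "Jordan_Normal_Form.Determinant"
begin

section \<open>Conjugate transpose and the unitary group\<close>

lemma conj_transpose_carrier [simp]: "A \<in> carrier_mat n m \<Longrightarrow> conj_transpose A \<in> carrier_mat m n"
  by (auto simp: conj_transpose_def)

lemma dim_conj_transpose [simp]:
  "dim_row (conj_transpose A) = dim_col A" "dim_col (conj_transpose A) = dim_row A"
  by (auto simp: conj_transpose_def)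

lemma index_conj_transpose [simp]:
  "i < dim_col A \<Longrightarrow> j < dim_row A \<Longrightarrow> conj_transpose A $$ (i,j) = cnj (A $$ (j,i))"
  by (auto simp: conj_transpose_def)

lemma conj_transpose_mult:
  assumes "A \<in> carrier_mat n m" "B \<in> carrier_mat m k"
  shows "conj_transpose (A * B) = conj_transpose B * conj_transpose A"
  using assms by (intro eq_matI) (auto simp: scalar_prod_def cnj_sum mult.commute)

lemma index_conj_transpose_mult:
  assumes "A \<in> carrier_mat n m" "B \<in> carrier_mat n k" "i < m" "j < k"
  shows "(conj_transpose A * B) $$ (i,j) = (\<Sum>l = 0..<n. cnj (A $$ (l,i)) * B $$ (l,j))"
  using assms by (simp add: scalar_prod_def)

lemma unitary_group_carrier: "A \<in> unitary_group n \<Longrightarrow> A \<in> carrier_mat n n"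
  by (simp add: unitary_group_def)

lemma unitary_group_left_inverse: "A \<in> unitary_group n \<Longrightarrow> conj_transpose A * A = 1\<^sub>m n"
  by (rule mat_mult_left_right_inverse[of A n]) (auto simp: unitary_group_def)

lemma unitary_group_one: "1\<^sub>m n \<in> unitary_group n"
  by (auto simp: unitary_group_def conj_transpose_def)

lemma unitary_group_conj_transpose:
  assumes "A \<in> unitary_group n"
  shows "conj_transpose A \<in> unitary_group n"
proof -
  have "conj_transpose (conj_transpose A) = A"
    by (rule eq_matI) auto
  then show ?thesis
    using assms unitary_group_left_inverse[OF assms] by (auto simp: unitary_group_def)
qed

lemma unitary_group_mult:
  assumes "A \<in> unitary_group n" "B \<in> unitary_group n"
  shows "A * B \<in> unitary_group n"
proof -
  have A: "A \<in> carrier_mat n n" and B: "B \<in> carrier_mat n n"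
    using assms by (simp_all add: unitary_group_carrier)
  have "A * B * conj_transpose (A * B) = A * B * (conj_transpose B * conj_transpose A)"
    by (simp add: conj_transpose_mult[OF A B])
  also have "\<dots> = A * (B * (conj_transpose B * conj_transpose A))"
    using A B by (intro assoc_mult_mat mult_carrier_mat) auto
  also have "\<dots> = A * ((B * conj_transpose B) * conj_transpose A)"
    using A B by (simp add: assoc_mult_mat[of B n n "conj_transpose B" n "conj_transpose A" n])
  also have "\<dots> = 1\<^sub>m n"
    using assms A by (simp add: unitary_group_def)
  finally show ?thesis
    using A B by (simp add: unitary_group_def)
qed

lemma unitary_groupI:
  assumes "A \<in> carrier_mat n n"
    and "\<And>a c. a < n \<Longrightarrow> c < n \<Longrightarrow>
      (\<Sum>k = 0..<n. A $$ (a,k) * cnj (A $$ (c,k))) = (if a = c then 1 else 0)"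
  shows "A \<in> unitary_group n"
  using assms by (auto simp: unitary_group_def scalar_prod_def)

lemma foldr_mult_unitary_group:
  "(\<And>i. i \<in> set xs \<Longrightarrow> b i \<in> unitary_group n) \<Longrightarrow>
    foldr (\<lambda>i acc. b i * acc) xs (1\<^sub>m n) \<in> unitary_group n"
  by (induction xs) (auto intro: unitary_group_mult unitary_group_one)

lemma cnj_mult_self: "cnj z * z = of_real (cmod z) * of_real (cmod z)"
  by (metis complex_norm_square mult.commute of_real_mult power2_eq_square)

lemma exists_unit_phase: "\<exists>\<omega>. cnj \<omega> * \<omega> = 1 \<and> cnj z * \<omega> = of_real (cmod z)"
proof (cases "z = 0")
  case False
  then show ?thesis
    by (intro exI[of _ "z / of_real (cmod z)"]) (auto simp: cnj_mult_self norm_divide)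
qed (intro exI[of _ 1], simp)

lemma unitary_group_col_norm:
  assumes "A \<in> unitary_group n" "j < n"
  shows "(\<Sum>a = 0..<n. (cmod (A $$ (a,j)))^2) = 1"
proof -
  have "of_real (\<Sum>a = 0..<n. (cmod (A $$ (a,j)))^2) = (\<Sum>a = 0..<n. cnj (A $$ (a,j)) * A $$ (a,j))"
    by (simp add: of_real_sum cnj_mult_self power2_eq_square)
  also have "\<dots> = (conj_transpose A * A) $$ (j,j)"
    using unitary_group_carrier[OF assms(1)] assms(2) by (intro index_conj_transpose_mult[symmetric])
  also have "\<dots> = 1"
    using unitary_group_left_inverse[OF assms(1)] assms(2) by simp
  finally show ?thesis
    by (simp only: of_real_eq_1_iff)
qed

lemma col_eq_mult_unit_vec:
  fixes A :: "'a :: semiring_1 mat"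
  assumes "A \<in> carrier_mat n n" "j < n"
  shows "col A j = A *\<^sub>v unit_vec n j"
proof -
  have "col (A * 1\<^sub>m n) j = A *\<^sub>v col (1\<^sub>m n) j"
    using assms by (intro col_mult2) auto
  then show ?thesis
    using assms right_mult_one_mat[OF assms(1)] by simp
qed

lemma unitary_group_col_unit_imp_H_group:
  assumes h: "h \<in> unitary_group n" and col: "col h 0 = unit_vec n 0"
  shows "h \<in> H_group n"
proof -
  have hc: "h \<in> carrier_mat n n"
    using h by (rule unitary_group_carrier)
  have h0: "h $$ (a,0) = (if a = 0 then 1 else 0)" if "a < n" for a
    using arg_cong[OF col, of "\<lambda>v. v $ a"] hc that by auto
  have "h $$ (0,b) = 0 \<and> h $$ (b,0) = 0" if "0 < b" "b < n" for b
  proof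
    have "(\<Sum>l = 0..<n. cnj (h $$ (l,0)) * h $$ (l,b)) = (\<Sum>l = 0..<n. if l = 0 then h $$ (l,b) else 0)"
      by (intro sum.cong) (auto simp: h0)
    then have "h $$ (0,b) = (\<Sum>l = 0..<n. cnj (h $$ (l,0)) * h $$ (l,b))"
      using that by simp
    also have "\<dots> = (conj_transpose h * h) $$ (0,b)"
      by (rule index_conj_transpose_mult[symmetric, OF hc hc]) (use that in auto)
    also have "\<dots> = 0"
      using unitary_group_left_inverse[OF h] that by simp
    finally show "h $$ (0,b) = 0" .
    show "h $$ (b,0) = 0"
      using h0 that by simp
  qed
  then show ?thesis
    using h by (simp add: H_group_def)
qed

lemma conj_transpose_mult_H_group:
  assumes y: "y \<in> unitary_group n" and g: "g \<in> unitary_group n"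
    and "0 < n" and "col y 0 = col g 0"
  shows "conj_transpose y * g \<in> H_group n"
proof (rule unitary_group_col_unit_imp_H_group)
  show "conj_transpose y * g \<in> unitary_group n"
    using y g by (simp add: unitary_group_conj_transpose unitary_group_mult)
  have yc: "y \<in> carrier_mat n n" and gc: "g \<in> carrier_mat n n"
    using y g by (simp_all add: unitary_group_carrier)
  have "col (conj_transpose y * g) 0 = conj_transpose y *\<^sub>v col y 0"
    using yc gc assms(3,4) by (simp add: col_mult2[of _ n n])
  also have "\<dots> = col (conj_transpose y * y) 0"
    using yc assms(3) by (simp add: col_mult2[of _ n n])
  also have "\<dots> = unit_vec n 0"
    using unitary_group_left_inverse[OF y] assms(3) by simp
  finally show "col (conj_transpose y * g) 0 = unit_vec n 0" .
qed

section \<open>Block-diagonal phases and reflections\<close>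

definition block_inner ::
    "nat \<Rightarrow> (nat \<Rightarrow> nat) \<Rightarrow> (nat \<Rightarrow> complex) \<Rightarrow> (nat \<Rightarrow> complex) \<Rightarrow> nat \<Rightarrow> complex" where
  "block_inner n blk u v j = (\<Sum>a = 0..<n. if blk a = j then cnj (u a) * v a else 0)"

lemma cnj_block_inner: "cnj (block_inner n blk u v j) = block_inner n blk v u j"
  unfolding block_inner_def by (simp add: cnj_sum if_distrib mult.commute cong: if_cong)

lemma block_inner_diff_left:
  "block_inner n blk (\<lambda>a. u a - v a) x j = block_inner n blk u x j - block_inner n blk v x j"
  unfolding block_inner_def by (simp add: sum_subtractf[symmetric] algebra_simps if_distrib cong: if_cong)

lemma block_inner_diff_right:
  "block_inner n blk x (\<lambda>a. u a - v a) j = block_inner n blk x u j - block_inner n blk x v j"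
  unfolding block_inner_def by (simp add: sum_subtractf[symmetric] algebra_simps if_distrib cong: if_cong)

lemma block_inner_self:
  "block_inner n blk u u j = of_real (\<Sum>a = 0..<n. if blk a = j then (cmod (u a))^2 else 0)"
  unfolding block_inner_def of_real_sum
  by (intro sum.cong) (auto simp: complex_norm_square mult.commute simp flip: of_real_power)

lemma block_inner_self_eq_0:
  assumes "block_inner n blk u u j = 0" "a < n" "blk a = j"
  shows "u a = 0"
proof -
  have "(\<Sum>a = 0..<n. if blk a = j then (cmod (u a))^2 else 0) = 0"
    using assms(1) unfolding block_inner_self by (simp only: of_real_eq_0_iff)
  then have "(if blk a = j then (cmod (u a))^2 else 0) = 0"
    using assms(2) by (subst (asm) sum_nonneg_eq_0_iff) auto
  then show ?thesis
    using assms(3) by simp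
qed

(* On a block where w vanishes the division by zero yields 0, so there the reflection below
   is the identity. *)
definition block_proj :: "nat \<Rightarrow> (nat \<Rightarrow> nat) \<Rightarrow> (nat \<Rightarrow> complex) \<Rightarrow> nat \<Rightarrow> nat \<Rightarrow> complex" where
  "block_proj n blk w a c =
     (if blk a = blk c then w a * cnj (w c) / block_inner n blk w w (blk a) else 0)"

definition block_householder :: "nat \<Rightarrow> (nat \<Rightarrow> nat) \<Rightarrow> (nat \<Rightarrow> complex) \<Rightarrow> complex mat" where
  "block_householder n blk w =
     mat n n (\<lambda>(a,c). (if a = c then 1 else 0) - 2 * block_proj n blk w a c)"

definition block_phase :: "nat \<Rightarrow> (nat \<Rightarrow> nat) \<Rightarrow> (nat \<Rightarrow> complex) \<Rightarrow> complex mat" where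
  "block_phase n blk \<omega> = mat n n (\<lambda>(a,c). if a = c then \<omega> (blk a) else 0)"

lemma cnj_block_proj: "cnj (block_proj n blk w a c) = block_proj n blk w c a"
  using cnj_block_inner[of n blk w w] by (auto simp: block_proj_def mult.commute)

lemma block_proj_idem:
  "(\<Sum>l = 0..<n. block_proj n blk w a l * block_proj n blk w l c) = block_proj n blk w a c"
proof (cases "blk a = blk c")
  case True
  let ?N = "block_inner n blk w w (blk a)"
  have "(\<Sum>l = 0..<n. block_proj n blk w a l * block_proj n blk w l c) =
      (\<Sum>l = 0..<n. w a * cnj (w c) / ?N^2 * (if blk l = blk a then cnj (w l) * w l else 0))"
    using True by (intro sum.cong) (auto simp: block_proj_def power2_eq_square)
  also have "\<dots> = w a * cnj (w c) / ?N^2 * ?N"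
    by (simp add: block_inner_def sum_distrib_left)
  also have "\<dots> = block_proj n blk w a c"
    using True by (simp add: block_proj_def power2_eq_square)
  finally show ?thesis .
qed (auto simp: block_proj_def intro!: sum.neutral)

lemma block_householder_unitary: "block_householder n blk w \<in> unitary_group n"
proof (rule unitary_groupI)
  fix a c assume ac: "a < n" "c < n"
  let ?P = "block_proj n blk w"
  let ?\<delta> = "\<lambda>a c. if a = c then 1 else 0 :: complex"
  have "(\<Sum>l = 0..<n. block_householder n blk w $$ (a,l) * cnj (block_householder n blk w $$ (c,l)))
      = (\<Sum>l = 0..<n. (if l = a then ?\<delta> a c else 0) - (if l = a then 2 * ?P a c else 0)
           - (if l = c then 2 * ?P a c else 0) + 4 * (?P a l * ?P l c))"
    using ac by (intro sum.cong) (auto simp: block_householder_def cnj_block_proj algebra_simps)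
  also have "\<dots> = ?\<delta> a c - 2 * ?P a c - 2 * ?P a c + 4 * ?P a c"
    using ac by (simp add: sum.distrib sum_subtractf sum_distrib_left[symmetric] block_proj_idem)
  finally show "(\<Sum>l = 0..<n. block_householder n blk w $$ (a,l) * cnj (block_householder n blk w $$ (c,l)))
      = ?\<delta> a c"
    by simp
qed (simp add: block_householder_def)

lemma block_householder_mult_vec:
  assumes norms: "\<And>a. a < n \<Longrightarrow> block_inner n blk u u (blk a) = block_inner n blk v v (blk a)"
    and real: "\<And>a. a < n \<Longrightarrow> cnj (block_inner n blk v u (blk a)) = block_inner n blk v u (blk a)"
  shows "block_householder n blk (\<lambda>a. u a - v a) *\<^sub>v vec n u = vec n v"
proof (rule eq_vecI)
  fix a assume "a < dim_vec (vec n v)"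
  then have "a < n" by simp
  define w where "w = (\<lambda>a. u a - v a)"
  let ?N = "block_inner n blk w w (blk a)"
  let ?D = "block_inner n blk w u (blk a)"
  \<comment> \<open>equal norms and a real inner product make w = u - v satisfy <w,w> = 2 <w,u>, so H u = u - w\<close>
  have N: "?N = 2 * ?D"
    using norms[OF \<open>a < n\<close>] real[OF \<open>a < n\<close>] cnj_block_inner[of n blk v u]
    by (simp add: w_def block_inner_diff_left block_inner_diff_right)
  have "(\<Sum>c = 0..<n. block_proj n blk w a c * u c) =
      (\<Sum>c = 0..<n. w a / ?N * (if blk c = blk a then cnj (w c) * u c else 0))"
    by (intro sum.cong) (auto simp: block_proj_def)
  also have "\<dots> = w a / ?N * ?D"
    unfolding block_inner_def[of n blk w u] by (simp only: sum_distrib_left)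
  finally have P: "(\<Sum>c = 0..<n. block_proj n blk w a c * u c) = w a / ?N * ?D" .
  have "(block_householder n blk w *\<^sub>v vec n u) $ a =
      (\<Sum>c = 0..<n. (if c = a then u a else 0) - 2 * (block_proj n blk w a c * u c))"
    using \<open>a < n\<close> by (auto simp: block_householder_def scalar_prod_def algebra_simps intro: sum.cong)
  also have "\<dots> = u a - 2 * (w a / ?N * ?D)"
    using \<open>a < n\<close> by (simp add: sum_subtractf sum_distrib_left[symmetric] P)
  also have "\<dots> = v a"
  proof (cases "?N = 0")
    case True
    then show ?thesis
      using block_inner_self_eq_0[OF True \<open>a < n\<close>] by (simp add: w_def)
  next
    case False
    then show ?thesis
      unfolding N by (simp add: w_def field_simps)
  qed
  finally show "(block_householder n blk (\<lambda>a. u a - v a) *\<^sub>v vec n u) $ a = vec n v $ a"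
    using \<open>a < n\<close> by (simp add: w_def)
qed (simp add: block_householder_def)

lemma block_phase_unitary:
  assumes "\<And>j. cnj (\<omega> j) * \<omega> j = 1"
  shows "block_phase n blk \<omega> \<in> unitary_group n"
proof (rule unitary_groupI)
  fix a c assume ac: "a < n" "c < n"
  have "(\<Sum>l = 0..<n. block_phase n blk \<omega> $$ (a,l) * cnj (block_phase n blk \<omega> $$ (c,l)))
      = (\<Sum>l = 0..<n. if l = a then (if a = c then \<omega> (blk a) * cnj (\<omega> (blk a)) else 0) else 0)"
    using ac by (intro sum.cong) (auto simp: block_phase_def)
  then show "(\<Sum>l = 0..<n. block_phase n blk \<omega> $$ (a,l) * cnj (block_phase n blk \<omega> $$ (c,l)))
      = (if a = c then 1 else 0)"
    using ac assms by (simp add: mult.commute)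
qed (simp add: block_phase_def)

lemma block_phase_mult_vec:
  "block_phase n blk \<omega> *\<^sub>v vec n u = vec n (\<lambda>a. \<omega> (blk a) * u a)"
proof (rule eq_vecI)
  fix a assume "a < dim_vec (vec n (\<lambda>a. \<omega> (blk a) * u a))"
  then have a: "a < n" by simp
  have "(\<Sum>c = 0..<n. block_phase n blk \<omega> $$ (a,c) * u c) = (\<Sum>c = 0..<n. if c = a then \<omega> (blk a) * u a else 0)"
    using a by (intro sum.cong) (auto simp: block_phase_def)
  then show "(block_phase n blk \<omega> *\<^sub>v vec n u) $ a = vec n (\<lambda>a. \<omega> (blk a) * u a) $ a"
    using a by (simp add: block_phase_def scalar_prod_def)
qed (simp add: block_phase_def)

section \<open>Rotations in a coordinate plane\<close>

definition plane_generator :: "nat \<Rightarrow> nat \<Rightarrow> complex mat" where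
  "plane_generator n q = - mat_unit n 0 q + mat_unit n q 0"

definition plane_rotation :: "nat \<Rightarrow> nat \<Rightarrow> real \<Rightarrow> complex mat" where
  "plane_rotation n q t = mat n n (\<lambda>(a,c). of_real
     (if a = c then (if a = 0 \<or> a = q then cos t else 1)
      else if a = 0 \<and> c = q then - sin t
      else if a = q \<and> c = 0 then sin t else 0))"

lemma plane_generator_dim [simp]:
  "dim_row (plane_generator n q) = n" "dim_col (plane_generator n q) = n"
  by (simp_all add: plane_generator_def mat_unit_def)

lemma plane_generator_carrier [simp]: "plane_generator n q \<in> carrier_mat n n"
  by (intro carrier_matI) simp_all

lemma plane_rotation_carrier: "plane_rotation n q t \<in> carrier_mat n n"
  by (simp add: plane_rotation_def)

lemma index_plane_generator:
  "l < n \<Longrightarrow> c < n \<Longrightarrow>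
    plane_generator n q $$ (l,c) = (if l = q \<and> c = 0 then 1 else 0) - (if l = 0 \<and> c = q then 1 else 0)"
  by (simp add: plane_generator_def mat_unit_def)

lemma index_mult_plane_generator:
  assumes "M \<in> carrier_mat n n" "a < n" "c < n" "q < n"
  shows "(M * plane_generator n q) $$ (a,c) =
    (if c = 0 then M $$ (a,q) else 0) - (if c = q then M $$ (a,0) else 0)"
proof -
  have "(M * plane_generator n q) $$ (a,c) = (\<Sum>l = 0..<n. M $$ (a,l) * plane_generator n q $$ (l,c))"
    using assms by (simp add: scalar_prod_def)
  also have "\<dots> = (\<Sum>l = 0..<n. (if l = q then (if c = 0 then M $$ (a,q) else 0) else 0)
        - (if l = 0 then (if c = q then M $$ (a,0) else 0) else 0))"
    using assms by (intro sum.cong) (simp_all add: index_plane_generator right_diff_distrib)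
  finally show ?thesis
    using assms by (simp add: sum_subtractf)
qed

(* The entries of (t X)^m / m! for X = plane_generator n q: since X^2 is minus the projection
   onto the plane, they follow the Taylor coefficients of cos and sin. *)
definition rotation_term :: "nat \<Rightarrow> real \<Rightarrow> nat \<Rightarrow> nat \<Rightarrow> nat \<Rightarrow> real" where
  "rotation_term q t m a c = t^m *
     (if a = c then (if a = 0 \<or> a = q then cos_coeff m else if m = 0 then 1 else 0)
      else if a = 0 \<and> c = q then - sin_coeff m
      else if a = q \<and> c = 0 then sin_coeff m else 0)"

lemma rotation_term_Suc:
  assumes "q \<noteq> 0"
  shows "fact (Suc m) * rotation_term q t (Suc m) a c =
    t * ((if c = 0 then fact m * rotation_term q t m a q else 0)
       - (if c = q then fact m * rotation_term q t m a 0 else 0))"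
  using assms by (auto simp: rotation_term_def cos_coeff_Suc sin_coeff_Suc)

lemma plane_generator_power:
  assumes "0 < q" "q < n"
  shows "(of_real t \<cdot>\<^sub>m plane_generator n q) ^\<^sub>m m =
    mat n n (\<lambda>(a,c). of_real (fact m * rotation_term q t m a c))"
proof (induction m)
  case 0
  show ?case
    by (rule eq_matI) (auto simp: plane_generator_def mat_unit_def rotation_term_def)
next
  case (Suc m)
  let ?M = "(of_real t \<cdot>\<^sub>m plane_generator n q) ^\<^sub>m m"
  have M: "?M \<in> carrier_mat n n"
    by (simp add: Suc.IH)
  show ?case
  proof (rule eq_matI, goal_cases entry)
    case (entry a c)
    then have ac: "a < n" "c < n"
      by simp_all
    have "((of_real t \<cdot>\<^sub>m plane_generator n q) ^\<^sub>m Suc m) $$ (a,c) =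
        of_real t * (?M * plane_generator n q) $$ (a,c)"
      using M ac by (simp add: mult_smult_distrib[OF M plane_generator_carrier] del: index_mult_mat(1))
    also have "\<dots> = of_real t * ((if c = 0 then ?M $$ (a,q) else 0) - (if c = q then ?M $$ (a,0) else 0))"
      by (simp only: index_mult_plane_generator[OF M ac assms(2)])
    also have "\<dots> = of_real (t * ((if c = 0 then fact m * rotation_term q t m a q else 0)
       - (if c = q then fact m * rotation_term q t m a 0 else 0)))"
    proof -
      have Mq: "?M $$ (a,q) = of_real (fact m * rotation_term q t m a q)"
        and M0: "?M $$ (a,0) = of_real (fact m * rotation_term q t m a 0)"
        using ac assms by (simp_all add: Suc.IH)
      show ?thesis
        unfolding Mq M0 by (simp add: of_real_diff)
    qed
    also have "\<dots> = of_real (fact (Suc m) * rotation_term q t (Suc m) a c)"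
      using assms by (simp only: rotation_term_Suc)
    finally show ?case
      using ac by simp
  qed auto
qed

lemma rotation_term_sums:
  assumes "a < n" "c < n"
  shows "(\<lambda>m. of_real (rotation_term q t m a c)) sums plane_rotation n q t $$ (a,c)"
proof -
  have cos: "(\<lambda>m. t^m * cos_coeff m) sums cos t"
    using cos_converges[of t] by (simp add: mult.commute)
  have sin: "(\<lambda>m. t^m * sin_coeff m) sums sin t"
    using sin_converges[of t] by (simp add: mult.commute)
  have "(\<lambda>m. t^m * (if m = 0 then 1 else 0)) = (\<lambda>m. if m = 0 then 1 else 0)"
    by auto
  then have one: "(\<lambda>m. t^m * (if m = 0 then 1 else 0)) sums 1"
    using sums_single[of 0 "\<lambda>_. 1 :: real"] by simp
  have "(\<lambda>m. rotation_term q t m a c) sums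
     (if a = c then (if a = 0 \<or> a = q then cos t else 1)
      else if a = 0 \<and> c = q then - sin t
      else if a = q \<and> c = 0 then sin t else 0)"
    unfolding rotation_term_def using cos sin sums_minus[OF sin] one by auto
  then show ?thesis
    using assms by (simp add: plane_rotation_def sums_of_real_iff)
qed

lemma mat_exp_plane_generator:
  assumes "0 < q" "q < n"
  shows "mat_exp n (of_real t \<cdot>\<^sub>m plane_generator n q) = plane_rotation n q t"
proof (rule eq_matI)
  fix a c assume "a < dim_row (plane_rotation n q t)" "c < dim_col (plane_rotation n q t)"
  then have ac: "a < n" "c < n"
    by (simp_all add: plane_rotation_def)
  have "mat_exp n (of_real t \<cdot>\<^sub>m plane_generator n q) $$ (a,c) =
      (\<Sum>m. of_real (fact m * rotation_term q t m a c) / of_nat (fact m))"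
    using ac by (simp add: mat_exp_def plane_generator_power[OF assms])
  also have "\<dots> = (\<Sum>m. of_real (rotation_term q t m a c))"
    by simp
  also have "\<dots> = plane_rotation n q t $$ (a,c)"
    using rotation_term_sums[OF ac] by (rule sums_unique[symmetric])
  finally show "mat_exp n (of_real t \<cdot>\<^sub>m plane_generator n q) $$ (a,c) = plane_rotation n q t $$ (a,c)" .
qed (simp_all add: mat_exp_def plane_rotation_def)

lemma plane_rotation_mult_vec:
  assumes "0 < q" "q < n" "v \<in> carrier_vec n"
  shows "plane_rotation n q t *\<^sub>v v = vec n (\<lambda>a.
    if a = 0 then of_real (cos t) * v $ 0 - of_real (sin t) * v $ q
    else if a = q then of_real (sin t) * v $ 0 + of_real (cos t) * v $ q
    else v $ a)"
proof (rule eq_vecI, goal_cases entry)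
  case (entry a)
  then have a: "a < n"
    by simp
  let ?R = "plane_rotation n q t"
  have "(?R *\<^sub>v v) $ a = (\<Sum>c = 0..<n. (if c = 0 then ?R $$ (a,0) * v $ 0 else 0)
      + (if c = q then ?R $$ (a,q) * v $ q else 0) + (if c = a \<and> a \<noteq> 0 \<and> a \<noteq> q then v $ a else 0))"
    using a assms by (auto simp: plane_rotation_def scalar_prod_def intro!: sum.cong)
  also have "\<dots> = ?R $$ (a,0) * v $ 0 + ?R $$ (a,q) * v $ q + (if a \<noteq> 0 \<and> a \<noteq> q then v $ a else 0)"
    using a assms by (simp add: sum.distrib)
  finally show ?case
    using a assms by (auto simp: plane_rotation_def)
qed (simp add: plane_rotation_def)

lemma plane_rotation_unitary:
  assumes "0 < q" "q < n"
  shows "plane_rotation n q t \<in> unitary_group n"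
proof (rule unitary_groupI)
  fix a c assume ac: "a < n" "c < n"
  let ?R = "plane_rotation n q t"
  have "(\<Sum>l = 0..<n. ?R $$ (a,l) * cnj (?R $$ (c,l))) = (?R *\<^sub>v vec n (\<lambda>l. cnj (?R $$ (c,l)))) $ a"
    using ac by (simp add: plane_rotation_def scalar_prod_def)
  also have "\<dots> = (if a = c then 1 else 0)"
    using ac assms
    by (simp add: plane_rotation_mult_vec,
        auto simp: plane_rotation_def sin_cos_squared_add3 add.commute[of "sin t * sin t"]
          simp flip: of_real_mult of_real_diff of_real_add of_real_minus)
  finally show "(\<Sum>l = 0..<n. ?R $$ (a,l) * cnj (?R $$ (c,l))) = (if a = c then 1 else 0)" .
qed (simp add: plane_rotation_def)

lemma exists_polar_angle:
  fixes s x y :: real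
  assumes "0 \<le> s" "s^2 = x^2 + y^2"
  shows "\<exists>t. cos t * s = x \<and> sin t * s = y"
proof -
  define z where "z = Complex x y"
  have "s = cmod z"
    using assms by (simp add: z_def cmod_def real_sqrt_unique)
  moreover have "cos (Arg z) * cmod z = x" "sin (Arg z) * cmod z = y"
    using Re_rcis[of "cmod z" "Arg z"] Im_rcis[of "cmod z" "Arg z"]
    by (simp_all add: rcis_cmod_Arg z_def mult.commute)
  ultimately show ?thesis
    by blast
qed

section \<open>Block structure of a composition\<close>

definition block_lead_vec :: "nat list \<Rightarrow> (nat \<Rightarrow> real) \<Rightarrow> complex vec" where
  "block_lead_vec ns r = vec (sum_list ns) (\<lambda>a.
     if a = psum ns (block_of ns a) then of_real (r (block_of ns a)) else 0)"

lemma block_lead_vec_carrier [simp]: "block_lead_vec ns g \<in> carrier_vec (sum_list ns)"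
  by (simp add: block_lead_vec_def)

locale composition =
  fixes ns :: "nat list"
  assumes ns_ne: "ns \<noteq> []" and parts_pos: "\<forall>m \<in> set ns. 0 < m"
begin

abbreviation "n \<equiv> sum_list ns"
abbreviation "k \<equiv> length ns"

lemma psum_0 [simp]: "psum ns 0 = 0"
  by (simp add: psum_def)

lemma psum_Suc: "i < k \<Longrightarrow> psum ns (Suc i) = psum ns i + ns ! i"
  by (simp add: psum_def take_Suc_conv_app_nth)

lemma psum_eq_sum_list: "k \<le> i \<Longrightarrow> psum ns i = n"
  by (simp add: psum_def)

lemma psum_le_Suc: "psum ns i \<le> psum ns (Suc i)"
  by (cases "i < k") (auto simp: psum_Suc psum_eq_sum_list)

lemma psum_mono: "i \<le> j \<Longrightarrow> psum ns i \<le> psum ns j"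
  by (induction j rule: dec_induct) (auto intro: le_trans psum_le_Suc)

lemma psum_strict_mono:
  assumes "i < j" "j \<le> k"
  shows "psum ns i < psum ns j"
proof -
  have "psum ns i < psum ns (Suc i)"
    using assms parts_pos by (simp add: psum_Suc)
  also have "\<dots> \<le> psum ns j"
    using assms by (intro psum_mono) simp
  finally show ?thesis .
qed

lemma psum_less: "i < k \<Longrightarrow> psum ns i < n"
  using psum_strict_mono[of i k] psum_eq_sum_list[of k] by simp

lemma psum_pos: "0 < i \<Longrightarrow> i < k \<Longrightarrow> 0 < psum ns i"
  using psum_strict_mono[of 0 i] by simp

lemma sum_list_pos: "0 < n"
  using psum_less[of 0] ns_ne by simp

lemma block_of_bounds:
  assumes "a < n"
  shows "block_of ns a < k" "psum ns (block_of ns a) \<le> a" "a < psum ns (Suc (block_of ns a))"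
proof -
  have ex: "a < psum ns (Suc (k - 1))"
    using assms psum_eq_sum_list[of "Suc (k - 1)"] by simp
  show "a < psum ns (Suc (block_of ns a))"
    unfolding block_of_def by (rule LeastI[of "\<lambda>l. a < psum ns (Suc l)", OF ex])
  have "block_of ns a \<le> k - 1"
    unfolding block_of_def by (rule Least_le[of "\<lambda>l. a < psum ns (Suc l)", OF ex])
  then show "block_of ns a < k"
    using ns_ne by (cases ns) auto
  show "psum ns (block_of ns a) \<le> a"
  proof (cases "block_of ns a")
    case (Suc l)
    then have "\<not> a < psum ns (Suc l)"
      unfolding block_of_def by (metis lessI not_less_Least)
    then show ?thesis
      using Suc by simp
  qed simp
qed

lemma block_of_eqI:
  assumes "psum ns j \<le> a" "a < psum ns (Suc j)"
  shows "block_of ns a = j"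
proof (rule antisym)
  show "block_of ns a \<le> j"
    unfolding block_of_def by (rule Least_le) (use assms in auto)
  show "j \<le> block_of ns a"
  proof (rule ccontr)
    assume "\<not> j \<le> block_of ns a"
    then have "psum ns (Suc (block_of ns a)) \<le> psum ns j"
      by (intro psum_mono) simp
    moreover have "a < psum ns (Suc (block_of ns a))"
      unfolding block_of_def by (rule LeastI) (use assms in auto)
    ultimately show False
      using assms by simp
  qed
qed

lemma block_of_psum: "j < k \<Longrightarrow> block_of ns (psum ns j) = j"
  using psum_strict_mono[of j "Suc j"] by (intro block_of_eqI) auto

lemma block_of_0 [simp]: "block_of ns 0 = 0"
  using block_of_psum[of 0] ns_ne by simp

lemma sum_over_blocks: "(\<Sum>j<k. \<Sum>a = 0..<n. if block_of ns a = j then f a else 0) = (\<Sum>a = 0..<n. f a)"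
proof -
  have "(\<Sum>j<k. \<Sum>a = 0..<n. if block_of ns a = j then f a else 0) =
      (\<Sum>a = 0..<n. \<Sum>j<k. if block_of ns a = j then f a else 0)"
    by (rule sum.swap)
  also have "\<dots> = (\<Sum>a = 0..<n. f a)"
    using block_of_bounds(1) by (intro sum.cong) auto
  finally show ?thesis .
qed

lemma L_group_mult:
  assumes "A \<in> L_group ns" "B \<in> L_group ns"
  shows "A * B \<in> L_group ns"
proof -
  have A: "A \<in> carrier_mat n n" and B: "B \<in> carrier_mat n n"
    using assms by (auto simp: L_group_def unitary_group_def)
  have "(A * B) $$ (a,c) = 0" if "a < n" "c < n" "block_of ns a \<noteq> block_of ns c" for a c
  proof -
    have "A $$ (a,l) * B $$ (l,c) = 0" if "l < n" for l
      using assms that \<open>a < n\<close> \<open>c < n\<close> \<open>block_of ns a \<noteq> block_of ns c\<close>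
      unfolding L_group_def by (cases "block_of ns a = block_of ns l") auto
    then show ?thesis
      using A B that by (auto simp: scalar_prod_def intro!: sum.neutral)
  qed
  then show ?thesis
    using assms by (auto simp: L_group_def intro: unitary_group_mult)
qed

lemma block_householder_L_group: "block_householder n (block_of ns) w \<in> L_group ns"
  using block_householder_unitary by (auto simp: L_group_def block_householder_def block_proj_def)

lemma block_phase_L_group:
  "(\<And>j. cnj (\<omega> j) * \<omega> j = 1) \<Longrightarrow> block_phase n (block_of ns) \<omega> \<in> L_group ns"
  using block_phase_unitary by (auto simp: L_group_def block_phase_def)

lemma block_inner_lead:
  assumes "a < n" and lead: "\<And>c. c < n \<Longrightarrow> c \<noteq> psum ns (block_of ns c) \<Longrightarrow> u c = 0"
  defines "l \<equiv> psum ns (block_of ns a)"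
  shows "block_inner n (block_of ns) f u (block_of ns a) = cnj (f l) * u l"
proof -
  have l: "l < n" "block_of ns l = block_of ns a"
    using block_of_bounds[OF \<open>a < n\<close>] by (simp_all add: l_def psum_less block_of_psum)
  have "block_inner n (block_of ns) f u (block_of ns a) =
      (\<Sum>c = 0..<n. if c = l then cnj (f l) * u l else 0)"
    unfolding block_inner_def using lead l by (intro sum.cong) (auto simp: l_def)
  then show ?thesis
    using l by simp
qed

lemma exists_L_group_mult_block_lead_vec:
  assumes v: "v \<in> carrier_vec n"
    and norms: "\<And>j. of_real (r j ^ 2) = block_inner n (block_of ns) (($) v) (($) v) j"
  shows "\<exists>x\<in>L_group ns. x *\<^sub>v block_lead_vec ns r = v"
proof -
  let ?blk = "block_of ns"
  let ?l = "\<lambda>a. psum ns (?blk a)"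
  have "\<forall>j. \<exists>\<omega>. cnj \<omega> * \<omega> = 1 \<and> cnj (v $ psum ns j) * \<omega> = of_real (cmod (v $ psum ns j))"
    using exists_unit_phase by blast
  then obtain \<omega> where \<omega>_unit: "\<And>j. cnj (\<omega> j) * \<omega> j = 1"
    and \<omega>_align: "\<And>j. cnj (v $ psum ns j) * \<omega> j = of_real (cmod (v $ psum ns j))"
    by metis
  define u where "u = (\<lambda>a. \<omega> (?blk a) * (if a = ?l a then of_real (r (?blk a)) else 0))"
  have u_lead: "u c = 0" if "c < n" "c \<noteq> ?l c" for c
    using that by (simp add: u_def)
  have "block_householder n ?blk (\<lambda>a. u a - v $ a) *\<^sub>v vec n u = vec n (($) v)"
  proof (rule block_householder_mult_vec)
    fix a assume a: "a < n"
    have "?blk (?l a) = ?blk a"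
      using block_of_bounds(1)[OF a] by (simp add: block_of_psum)
    then have ul: "u (?l a) = \<omega> (?blk a) * of_real (r (?blk a))"
      by (simp add: u_def)
    have "block_inner n ?blk u u (?blk a) = cnj (u (?l a)) * u (?l a)"
      by (rule block_inner_lead[OF a u_lead])
    also have "\<dots> = (cnj (\<omega> (?blk a)) * \<omega> (?blk a)) * of_real (r (?blk a) ^ 2)"
      by (simp add: ul power2_eq_square algebra_simps)
    also have "\<dots> = block_inner n ?blk (($) v) (($) v) (?blk a)"
      by (simp only: \<omega>_unit norms mult_1_left)
    finally show "block_inner n ?blk u u (?blk a) = block_inner n ?blk (($) v) (($) v) (?blk a)" .
    have "block_inner n ?blk (($) v) u (?blk a) = cnj (v $ ?l a) * u (?l a)"
      by (rule block_inner_lead[OF a u_lead])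
    also have "\<dots> = of_real (cmod (v $ ?l a) * r (?blk a))"
      by (simp only: ul mult.assoc[symmetric] \<omega>_align of_real_mult)
    finally show "cnj (block_inner n ?blk (($) v) u (?blk a)) = block_inner n ?blk (($) v) u (?blk a)"
      by (simp only: complex_cnj_complex_of_real)
  qed
  moreover have "vec n (($) v) = v"
    using v by (intro eq_vecI) auto
  moreover have "block_phase n ?blk \<omega> *\<^sub>v block_lead_vec ns r = vec n u"
    by (simp add: block_lead_vec_def block_phase_mult_vec u_def)
  ultimately have "(block_householder n ?blk (\<lambda>a. u a - v $ a) * block_phase n ?blk \<omega>) *\<^sub>v block_lead_vec ns r = v"
    by (simp add: block_householder_def block_phase_def assoc_mult_mat_vec[of _ n n _ n])
  moreover have "block_householder n ?blk (\<lambda>a. u a - v $ a) * block_phase n ?blk \<omega> \<in> L_group ns"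
    using block_householder_L_group block_phase_L_group[OF \<omega>_unit] by (rule L_group_mult)
  ultimately show ?thesis
    by blast
qed

lemma X_gen_eq_plane_generator: "X_gen ns i = plane_generator n (psum ns i)"
  by (simp add: X_gen_def plane_generator_def)

lemma B_i_eq_range:
  assumes "0 < i" "i < k"
  shows "B_i ns i = range (plane_rotation n (psum ns i))"
  using mat_exp_plane_generator[OF psum_pos[OF assms] psum_less[OF assms(2)]]
  by (auto simp: B_i_def X_gen_eq_plane_generator)

lemma B_set_subset_unitary_group: "B_set ns \<subseteq> unitary_group n"
proof
  fix b assume "b \<in> B_set ns"
  then obtain f where b: "b = foldr (\<lambda>i acc. f i * acc) [1..<k] (1\<^sub>m n)"
    and f: "\<forall>i\<in>{1..<k}. f i \<in> B_i ns i"
    by (auto simp: B_set_def)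
  have "f i \<in> unitary_group n" if "i \<in> set [1..<k]" for i
  proof -
    have i: "0 < i" "i < k"
      using that by auto
    then have "f i \<in> range (plane_rotation n (psum ns i))"
      using f B_i_eq_range[OF i] by auto
    then obtain t where "f i = plane_rotation n (psum ns i) t"
      by blast
    then show ?thesis
      using plane_rotation_unitary psum_pos[OF i] psum_less[OF i(2)] by simp
  qed
  then show "b \<in> unitary_group n"
    unfolding b by (rule foldr_mult_unitary_group)
qed

lemma plane_rotation_mult_block_lead_vec:
  assumes m: "0 < m" "m < k" and "g m = 0"
  shows "plane_rotation n (psum ns m) t *\<^sub>v block_lead_vec ns g =
    block_lead_vec ns (g(0 := cos t * g 0, m := sin t * g 0))"
proof -
  let ?q = "psum ns m"
  have q: "0 < ?q" "?q < n" "block_of ns ?q = m"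
    using m by (simp_all add: psum_pos psum_less block_of_psum)
  have lead0: "block_lead_vec ns g $ 0 = of_real (g 0)" and leadq: "block_lead_vec ns g $ ?q = 0"
    using q assms by (auto simp: block_lead_vec_def)
  show ?thesis
  proof (rule eq_vecI)
    fix a assume "a < dim_vec (block_lead_vec ns (g(0 := cos t * g 0, m := sin t * g 0)))"
    then have a: "a < n"
      by (simp add: block_lead_vec_def)
    have "block_of ns a \<noteq> 0" "block_of ns a \<noteq> m" if "a \<noteq> 0" "a \<noteq> ?q" "a = psum ns (block_of ns a)"
      using that by (metis psum_0)+
    then show "(plane_rotation n ?q t *\<^sub>v block_lead_vec ns g) $ a =
        block_lead_vec ns (g(0 := cos t * g 0, m := sin t * g 0)) $ a"
      using a q m lead0 leadq
      by (auto simp: plane_rotation_mult_vec block_lead_vec_def simp flip: of_real_mult)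
  qed (simp add: plane_rotation_def block_lead_vec_def)
qed

definition rotations :: "(nat \<Rightarrow> real) \<Rightarrow> nat list \<Rightarrow> complex mat" where
  "rotations \<theta> xs = foldr (\<lambda>i acc. plane_rotation n (psum ns i) (\<theta> i) * acc) xs (1\<^sub>m n)"

lemma rotations_unitary: "set xs \<subseteq> {0<..<k} \<Longrightarrow> rotations \<theta> xs \<in> unitary_group n"
  unfolding rotations_def
  by (intro foldr_mult_unitary_group plane_rotation_unitary) (auto simp: psum_pos psum_less)

lemma rotations_B_set: "rotations \<theta> [1..<k] \<in> B_set ns"
  unfolding rotations_def B_set_def using B_i_eq_range by auto

lemma unit_vec_eq_block_lead_vec:
  assumes "g 0 = 1" "\<And>j. 0 < j \<Longrightarrow> j < k \<Longrightarrow> g j = 0"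
  shows "unit_vec n 0 = block_lead_vec ns g"
proof (rule eq_vecI)
  fix a assume "a < dim_vec (block_lead_vec ns g)"
  then have a: "a < n"
    by (simp add: block_lead_vec_def)
  have "a = psum ns (block_of ns a) \<and> block_of ns a = 0 \<longleftrightarrow> a = 0"
    by auto
  then show "unit_vec n 0 $ a = block_lead_vec ns g $ a"
    using a block_of_bounds(1)[OF a] assms by (auto simp: block_lead_vec_def)
qed (simp add: block_lead_vec_def)

(* g m describes the first column of the product of the rotations with indices m, ..., k - 1:
   the weights of blocks 0, ..., m - 1 are still merged into the first coordinate. *)
lemma rotations_mult_unit_vec:
  assumes sum_r: "(\<Sum>j<k. r j ^ 2) = 1" and m: "0 < m" "m \<le> k"
  defines "g \<equiv> \<lambda>m j. if j = 0 then sqrt (\<Sum>l<m. r l ^ 2) else if j < m then 0 else r j"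
  shows "\<exists>\<theta>. rotations \<theta> [m..<k] *\<^sub>v unit_vec n 0 = block_lead_vec ns (g m)"
  using m(2,1)
proof (induction m rule: inc_induct)
  case base
  have "unit_vec n 0 = block_lead_vec ns (g k)"
    using sum_r by (intro unit_vec_eq_block_lead_vec) (simp_all add: g_def)
  then show ?case
    by (simp add: rotations_def)
next
  case (step m)
  obtain \<theta> where \<theta>: "rotations \<theta> [Suc m..<k] *\<^sub>v unit_vec n 0 = block_lead_vec ns (g (Suc m))"
    using step.IH by auto
  have "0 \<le> g (Suc m) 0" "g (Suc m) 0 ^ 2 = g m 0 ^ 2 + r m ^ 2"
    by (simp_all add: g_def sum_nonneg)
  then obtain t where t: "cos t * g (Suc m) 0 = g m 0" "sin t * g (Suc m) 0 = r m"
    by (blast dest: exists_polar_angle)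
  have "rotations \<theta> [Suc m..<k] \<in> unitary_group n"
    by (rule rotations_unitary) auto
  then have F: "rotations \<theta> [Suc m..<k] \<in> carrier_mat n n"
    by (rule unitary_group_carrier)
  have "rotations (\<theta>(m := t)) [Suc m..<k] = rotations \<theta> [Suc m..<k]"
    unfolding rotations_def by (rule foldr_cong) auto
  then have "rotations (\<theta>(m := t)) [m..<k] = plane_rotation n (psum ns m) t * rotations \<theta> [Suc m..<k]"
    using step.hyps(2) by (simp add: rotations_def upt_conv_Cons)
  then have "rotations (\<theta>(m := t)) [m..<k] *\<^sub>v unit_vec n 0 =
      plane_rotation n (psum ns m) t *\<^sub>v block_lead_vec ns (g (Suc m))"
    using \<theta> by (simp add: assoc_mult_mat_vec[OF plane_rotation_carrier F unit_vec_carrier])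
  also have "\<dots> = block_lead_vec ns ((g (Suc m))(0 := cos t * g (Suc m) 0, m := sin t * g (Suc m) 0))"
    by (rule plane_rotation_mult_block_lead_vec[OF step.prems step.hyps(2)]) (use step.prems in \<open>simp add: g_def\<close>)
  also have "(g (Suc m))(0 := cos t * g (Suc m) 0, m := sin t * g (Suc m) 0) = g m"
    using t step.prems by (auto simp: g_def fun_eq_iff)
  finally show ?case
    by (rule exI[of _ "\<theta>(m := t)"])
qed

lemma exists_B_set_col_block_lead_vec:
  assumes r: "\<And>j. 0 \<le> r j" and sum_r: "(\<Sum>j<k. r j ^ 2) = 1"
  shows "\<exists>b\<in>B_set ns. col b 0 = block_lead_vec ns r"
proof -
  have "(\<lambda>j. if j = 0 then sqrt (\<Sum>l<1. r l ^ 2) else if j < 1 then 0 else r j) = r"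
    using r by auto
  then obtain \<theta> where \<theta>: "rotations \<theta> [1..<k] *\<^sub>v unit_vec n 0 = block_lead_vec ns r"
    using rotations_mult_unit_vec[OF sum_r, of 1] ns_ne by (cases ns) auto
  have "rotations \<theta> [1..<k] \<in> unitary_group n"
    by (rule rotations_unitary) auto
  then have "col (rotations \<theta> [1..<k]) 0 = block_lead_vec ns r"
    using \<theta> col_eq_mult_unit_vec[OF unitary_group_carrier sum_list_pos] by simp
  then show ?thesis
    using rotations_B_set by blast
qed

lemma unitary_group_LBH_decomposition:
  assumes g: "g \<in> unitary_group n"
  shows "\<exists>x b h. g = x * b * h \<and> x \<in> L_group ns \<and> b \<in> B_set ns \<and> h \<in> H_group n"
proof -
  have gc: "g \<in> carrier_mat n n"
    using g by (rule unitary_group_carrier)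
  define v where "v = col g 0"
  define r where "r j = sqrt (\<Sum>a = 0..<n. if block_of ns a = j then (cmod (v $ a))^2 else 0)" for j
  have r_nonneg: "0 \<le> r j" for j
    by (simp add: r_def sum_nonneg)
  have r_sq: "of_real (r j ^ 2) = block_inner n (block_of ns) (($) v) (($) v) j" for j
    by (simp add: r_def block_inner_self sum_nonneg)
  have "(\<Sum>j<k. r j ^ 2) = (\<Sum>a = 0..<n. (cmod (g $$ (a,0)))^2)"
    using gc sum_list_pos by (simp add: r_def sum_nonneg sum_over_blocks v_def)
  also have "\<dots> = 1"
    using g sum_list_pos by (rule unitary_group_col_norm)
  finally obtain b where b: "b \<in> B_set ns" "col b 0 = block_lead_vec ns r"
    using exists_B_set_col_block_lead_vec[of r, OF r_nonneg] by blast
  have "v \<in> carrier_vec n"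
    using gc by (simp add: v_def carrier_vecI)
  then obtain x where x: "x \<in> L_group ns" "x *\<^sub>v block_lead_vec ns r = v"
    using exists_L_group_mult_block_lead_vec[of v r, OF _ r_sq] by blast
  define y where "y = x * b"
  have xU: "x \<in> unitary_group n" and bU: "b \<in> unitary_group n"
    using x b B_set_subset_unitary_group by (auto simp: L_group_def)
  then have yU: "y \<in> unitary_group n"
    by (simp add: y_def unitary_group_mult)
  have "col y 0 = x *\<^sub>v col b 0"
    unfolding y_def using unitary_group_carrier[OF xU] unitary_group_carrier[OF bU] sum_list_pos
    by (rule col_mult2)
  then have "col y 0 = col g 0"
    using x b by (simp add: v_def)
  then have "conj_transpose y * g \<in> H_group n"
    using yU g sum_list_pos by (intro conj_transpose_mult_H_group)
  moreover have "y * (conj_transpose y * g) = g"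
  proof -
    have yc: "y \<in> carrier_mat n n"
      using yU by (rule unitary_group_carrier)
    have "y * (conj_transpose y * g) = y * conj_transpose y * g"
      using yc gc by (intro assoc_mult_mat[symmetric]) auto
    then show ?thesis
      using yU gc by (simp add: unitary_group_def)
  qed
  ultimately show ?thesis
    using x b unfolding y_def by metis
qed

end

theorem theorem5p1:
  fixes ns :: "nat list"
  assumes "ns \<noteq> []"
    and "\<forall>m \<in> set ns. 0 < m"
  shows "unitary_group (sum_list ns) =
    {x * b * h | x b h. x \<in> L_group ns \<and> b \<in> B_set ns \<and> h \<in> H_group (sum_list ns)}"
proof -
  interpret composition ns
    using assms by unfold_locales
  show ?thesis
  proof (intro equalityI subsetI)
    fix g assume "g \<in> unitary_group (sum_list ns)"
    then show "g \<in> {x * b * h | x b h. x \<in> L_group ns \<and> b \<in> B_set ns \<and> h \<in> H_group (sum_list ns)}"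
      using unitary_group_LBH_decomposition by blast
  next
    fix g assume "g \<in> {x * b * h | x b h. x \<in> L_group ns \<and> b \<in> B_set ns \<and> h \<in> H_group (sum_list ns)}"
    then obtain x b h where "g = x * b * h" "x \<in> L_group ns" "b \<in> B_set ns" "h \<in> H_group (sum_list ns)"
      by blast
    then show "g \<in> unitary_group (sum_list ns)"
      using B_set_subset_unitary_group by (auto simp: L_group_def H_group_def intro!: unitary_group_mult)
  qed
qed

end
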